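(* Let $V\subset\mathbb{Z}^2$ be site-connected. Then each vertex of the graph $B(V)$ has degree two. Consequently $B(V)$ is a vertex-disjoint union of vertex self-avoiding circuits and vertex self-avoiding doubly-infinite paths. If moreover $V$ is infinite, then $B(V)$ contains no vertex self-avoiding circuits.
   Context: Vertices $x,y\in\mathbb{Z}^2$ are site-neighbors if $\|x-y\|_1=1$. A set $W\subset\mathbb{Z}^2$ is site-connected if any two of its points are joined by a path of successive site-neighbors staying in $W$; a site-component of $W$ is a maximal site-connected subset. The closure $\overline{V}$ of $V\subset\mathbb{Z}^2$ is the union of $V$ with all finite site-components of $\mathbb{Z}^2\setminus V$. The dual lattice has vertex set $\mathbb{Z}^2+(\tfrac12,\tfrac12)$ and edges between points at Euclidean distance 1; each dual edge bisects a unique edge $\{x,y\}$ of $\mathbb{Z}^2$. The dual edge boundary $B(V)$ is the subgraph of the dual lattice induced by the set of dual edges whose bisecting edge $\{x,y\}$ has $x\in\overline{V}$ and $y\notin\overline{V}$. *)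

theory Defs
  imports Main
begin

type_synonym pt = "int \<times> int"

definition site_adj :: "pt \<Rightarrow> pt \<Rightarrow> bool" where
  "site_adj x y \<longleftrightarrow> \<bar>fst x - fst y\<bar> + \<bar>snd x - snd y\<bar> = 1"

definition site_path :: "pt set \<Rightarrow> pt \<Rightarrow> pt \<Rightarrow> bool" where
  "site_path W = (\<lambda>a b. a \<in> W \<and> b \<in> W \<and> site_adj a b)\<^sup>*\<^sup>*"

definition site_connected :: "pt set \<Rightarrow> bool" where
  "site_connected W \<longleftrightarrow> (\<forall>x\<in>W. \<forall>y\<in>W. site_path W x y)"

definition site_component :: "pt set \<Rightarrow> pt set \<Rightarrow> bool" where
  "site_component W C \<longleftrightarrow> C \<noteq> {} \<and> C \<subseteq> W \<and> site_connected C \<and>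
     (\<forall>D. C \<subseteq> D \<and> D \<subseteq> W \<and> site_connected D \<longrightarrow> D = C)"

definition lattice_closure :: "pt set \<Rightarrow> pt set" where
  "lattice_closure V = V \<union> \<Union>{C. site_component (- V) C \<and> finite C}"

text \<open>Dual lattice convention: the dual vertex (a+1/2, b+1/2) is represented by
  the integer pair (a,b). Two dual vertices are joined by a dual edge iff their
  Euclidean distance is 1, i.e. iff their representatives are site-neighbours.
  The dual edge {p,q} bisects the primal edge {x,y} iff {x,y} is an edge of Z^2
  with the same midpoint, i.e. x + y = (p + (1/2,1/2)) + (q + (1/2,1/2)).\<close>
definition dual_adj :: "pt \<Rightarrow> pt \<Rightarrow> bool" where
  "dual_adj p q \<longleftrightarrow> site_adj p q"

definition bisects :: "pt \<Rightarrow> pt \<Rightarrow> pt \<Rightarrow> pt \<Rightarrow> bool" where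
  "bisects p q x y \<longleftrightarrow> dual_adj p q \<and> site_adj x y \<and>
     fst x + fst y = fst p + fst q + 1 \<and> snd x + snd y = snd p + snd q + 1"

definition B_edge :: "pt set \<Rightarrow> pt \<Rightarrow> pt \<Rightarrow> bool" where
  "B_edge V p q \<longleftrightarrow> (\<exists>x y. bisects p q x y \<and>
     ((x \<in> lattice_closure V \<and> y \<notin> lattice_closure V) \<or>
      (y \<in> lattice_closure V \<and> x \<notin> lattice_closure V)))"

definition B_verts :: "pt set \<Rightarrow> pt set" where
  "B_verts V = {p. \<exists>q. B_edge V p q}"

definition B_degree :: "pt set \<Rightarrow> pt \<Rightarrow> nat" where
  "B_degree V p = card {q. B_edge V p q}"

definition is_circuit :: "(pt \<Rightarrow> pt \<Rightarrow> bool) \<Rightarrow> nat \<Rightarrow> (nat \<Rightarrow> pt) \<Rightarrow> bool" where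
  "is_circuit E n c \<longleftrightarrow> n \<ge> 3 \<and> inj_on c {..<n} \<and> (\<forall>i<n. E (c i) (c ((i + 1) mod n)))"

definition is_biinf_path :: "(pt \<Rightarrow> pt \<Rightarrow> bool) \<Rightarrow> (int \<Rightarrow> pt) \<Rightarrow> bool" where
  "is_biinf_path E f \<longleftrightarrow> inj f \<and> (\<forall>i. E (f i) (f (i + 1)))"

end

theory Submission
  imports Defs
begin

text \<open>At a dual vertex, B(V) has one edge for each side of the four surrounding squares that
  separates the closure of V from its complement, so its degree is 0, 2 or 4, and it is 4 only in
  a checkerboard configuration. Both such configurations are excluded by a discrete Jordan curve
  argument: the two diagonal squares lie in V, so a walk inside V between them, closed up through
  a third corner, has an inside/outside parity that is finitely supported, hence vanishes on the
  infinite complement components met by the other two corners, although it must differ across them.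
  A graph all of whose vertices have degree two decomposes into circuits and bi-infinite paths,
  obtained by following non-backtracking walks. Finally, a circuit of B(V) is itself a closed walk:
  its parity is constant on the connected set V and on the infinite complement components, hence
  zero on both when V is infinite, but it crosses an edge between them exactly once.\<close>

section \<open>Primal and dual edges\<close>

lemma site_adj_iff:
  "site_adj x y \<longleftrightarrow>
    y = (fst x + 1, snd x) \<or> y = (fst x - 1, snd x) \<or> y = (fst x, snd x + 1) \<or> y = (fst x, snd x - 1)"
  by (cases x; cases y) (auto simp: site_adj_def abs_if)

lemma site_adj_sym: "site_adj x y \<Longrightarrow> site_adj y x"
  by (auto simp: site_adj_def abs_minus_commute)

lemma bisects_iff:
  "bisects (a, b) q x y \<longleftrightarrow>
    (q = (a + 1, b) \<and> (x = (a + 1, b) \<and> y = (a + 1, b + 1) \<or> x = (a + 1, b + 1) \<and> y = (a + 1, b))) \<or>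
    (q = (a - 1, b) \<and> (x = (a, b) \<and> y = (a, b + 1) \<or> x = (a, b + 1) \<and> y = (a, b))) \<or>
    (q = (a, b + 1) \<and> (x = (a, b + 1) \<and> y = (a + 1, b + 1) \<or> x = (a + 1, b + 1) \<and> y = (a, b + 1))) \<or>
    (q = (a, b - 1) \<and> (x = (a, b) \<and> y = (a + 1, b) \<or> x = (a + 1, b) \<and> y = (a, b)))"
  (is "_ \<longleftrightarrow> ?R")
proof
  assume h: "bisects (a, b) q x y"
  obtain q1 q2 x1 x2 y1 y2 where e: "q = (q1, q2)" "x = (x1, x2)" "y = (y1, y2)"
    by (metis surj_pair)
  from h have "site_adj (a, b) (q1, q2)" "site_adj (x1, x2) (y1, y2)"
    "x1 + y1 = a + q1 + 1" "x2 + y2 = b + q2 + 1"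
    by (auto simp: bisects_def dual_adj_def e)
  then show ?R
    unfolding site_adj_iff e by (elim disjE) auto
next
  assume ?R
  then show "bisects (a, b) q x y"
    by (auto simp: bisects_def dual_adj_def site_adj_iff)
qed

lemma bisects_unique_dual:
  assumes "bisects p q x y" "bisects p' q' x y"
  shows "{p', q'} = {p, q}"
proof -
  obtain a b a' b' where p: "p = (a, b)" and p': "p' = (a', b')" by fastforce
  have "p' = p \<and> q' = q \<or> p' = q \<and> q' = p"
    using assms unfolding p p' bisects_iff by auto
  then show ?thesis by auto
qed

lemma bisects_unique_primal:
  assumes "bisects p q x y" "bisects p q x' y'"
  shows "{x', y'} = {x, y}"
proof -
  obtain a b where p: "p = (a, b)" by fastforce
  have "x' = x \<and> y' = y \<or> x' = y \<and> y' = x"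
    using assms unfolding p bisects_iff by auto
  then show ?thesis by auto
qed

lemma bisects_swap_primal: "bisects p q x y \<Longrightarrow> bisects p q y x"
  by (auto simp: bisects_def site_adj_def abs_minus_commute)

lemma bisects_swap_dual: "bisects p q x y \<Longrightarrow> bisects q p x y"
  by (auto simp: bisects_def dual_adj_def site_adj_def abs_minus_commute)

lemma ex_bisects: "site_adj x y \<Longrightarrow> \<exists>p q. bisects p q x y"
proof -
  assume "site_adj x y"
  moreover obtain a b where x: "x = (a, b)" by fastforce
  ultimately consider "y = (a + 1, b)" | "y = (a - 1, b)" | "y = (a, b + 1)" | "y = (a, b - 1)"
    by (auto simp: site_adj_iff)
  then show ?thesis
  proof cases
    case 1
    then have "bisects (a, b) (a, b - 1) x y" by (simp add: x bisects_iff)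
    then show ?thesis by blast
  next
    case 2
    then have "bisects (a - 1, b) (a - 1, b - 1) x y" by (simp add: x bisects_iff)
    then show ?thesis by blast
  next
    case 3
    then have "bisects (a - 1, b) (a, b) x y" by (simp add: x bisects_iff)
    then show ?thesis by blast
  next
    case 4
    then have "bisects (a - 1, b - 1) (a, b - 1) x y" by (simp add: x bisects_iff)
    then show ?thesis by blast
  qed
qed

section \<open>Parity of closed lattice walks\<close>

definition closed_walk :: "(nat \<Rightarrow> pt) \<Rightarrow> nat \<Rightarrow> bool" where
  "closed_walk g N \<longleftrightarrow> (\<forall>i<N. site_adj (g i) (g (Suc i))) \<and> g N = g 0"

definition traversals :: "(nat \<Rightarrow> pt) \<Rightarrow> nat \<Rightarrow> pt set \<Rightarrow> nat" where
  "traversals g N e = (\<Sum>i<N. of_bool ({g i, g (Suc i)} = e))"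

lemma traversed_if_odd_traversals:
  assumes "odd (traversals g N e)"
  shows "\<exists>i<N. {g i, g (Suc i)} = e"
proof (rule ccontr)
  assume "\<not> ?thesis"
  then have "traversals g N e = 0" unfolding traversals_def by (intro sum.neutral) auto
  with assms show False by simp
qed

text \<open>The step from s to t crosses the horizontal ray {(x, d + 1/2) | x > c}.\<close>
definition crosses_ray :: "pt \<Rightarrow> pt \<Rightarrow> int \<Rightarrow> int \<Rightarrow> bool" where
  "crosses_ray s t c d \<longleftrightarrow>
     fst s = fst t \<and> c < fst s \<and> (snd s = d \<and> snd t = d + 1 \<or> snd s = d + 1 \<and> snd t = d)"

definition ray_crossings :: "(nat \<Rightarrow> pt) \<Rightarrow> nat \<Rightarrow> int \<Rightarrow> int \<Rightarrow> nat" where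
  "ray_crossings g N c d = (\<Sum>i<N. of_bool (crosses_ray (g i) (g (Suc i)) c d))"

definition membership_changes :: "(nat \<Rightarrow> pt) \<Rightarrow> nat \<Rightarrow> pt set \<Rightarrow> nat" where
  "membership_changes g N H = (\<Sum>i<N. of_bool ((g i \<in> H) \<noteq> (g (Suc i) \<in> H)))"

lemma even_membership_changes_iff:
  "even (membership_changes g N H) \<longleftrightarrow> (g 0 \<in> H \<longleftrightarrow> g N \<in> H)"
  by (induction N) (auto simp: membership_changes_def)

lemma ray_crossings_shift:
  "ray_crossings g N c d = ray_crossings g N (c + 1) d + traversals g N {(c + 1, d), (c + 1, d + 1)}"
  unfolding ray_crossings_def traversals_def sum.distrib[symmetric]
proof (rule sum.cong)
  fix i
  obtain s1 s2 t1 t2 where "g i = (s1, s2)" "g (Suc i) = (t1, t2)" by fastforce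
  then show "of_bool (crosses_ray (g i) (g (Suc i)) c d) =
      of_bool (crosses_ray (g i) (g (Suc i)) (c + 1) d) +
      (of_bool ({g i, g (Suc i)} = {(c + 1, d), (c + 1, d + 1)}) :: nat)"
    by (auto simp: crosses_ray_def doubleton_eq_iff)
qed simp

text \<open>Every step entering or leaving the half-line {(x, d + 1) | x > c} is counted exactly once.\<close>
lemma ray_crossings_even:
  assumes "closed_walk g N"
  shows "even (ray_crossings g N c d + ray_crossings g N c (d + 1) + traversals g N {(c, d + 1), (c + 1, d + 1)})"
proof -
  let ?H = "{p. c < fst p \<and> snd p = d + 1}"
  have "ray_crossings g N c d + ray_crossings g N c (d + 1) + traversals g N {(c, d + 1), (c + 1, d + 1)} =
      membership_changes g N ?H"
    unfolding ray_crossings_def traversals_def membership_changes_def sum.distrib[symmetric]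
  proof (rule sum.cong)
    fix i assume "i \<in> {..<N}"
    then have "site_adj (g i) (g (Suc i))" using assms by (simp add: closed_walk_def)
    moreover obtain s1 s2 t1 t2 where "g i = (s1, s2)" "g (Suc i) = (t1, t2)" by fastforce
    ultimately show "of_bool (crosses_ray (g i) (g (Suc i)) c d) + of_bool (crosses_ray (g i) (g (Suc i)) c (d + 1)) +
        of_bool ({g i, g (Suc i)} = {(c, d + 1), (c + 1, d + 1)}) =
        (of_bool ((g i \<in> ?H) \<noteq> (g (Suc i) \<in> ?H)) :: nat)"
      unfolding site_adj_iff by (elim disjE) (auto simp: crosses_ray_def doubleton_eq_iff)
  qed simp
  then show ?thesis using even_membership_changes_iff[of g N ?H] assms by (simp add: closed_walk_def)
qed

text \<open>Far to the left, the ray meets the walk exactly where the walk crosses the whole line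
  between heights d and d + 1, which a closed walk does an even number of times.\<close>
lemma odd_ray_crossings_bounded:
  assumes walk: "closed_walk g N"
    and bound: "\<forall>i\<le>N. \<bar>fst (g i)\<bar> \<le> M \<and> \<bar>snd (g i)\<bar> \<le> M"
    and odd: "odd (ray_crossings g N c d)"
  shows "-M \<le> c \<and> c < M \<and> -M \<le> d \<and> d < M"
proof -
  have crossing: "\<exists>i<N. crosses_ray (g i) (g (Suc i)) c d"
  proof (rule ccontr)
    assume "\<not> ?thesis"
    then have "ray_crossings g N c d = 0" unfolding ray_crossings_def by (intro sum.neutral) auto
    with odd show False by simp
  qed
  then obtain i where i: "i < N" "crosses_ray (g i) (g (Suc i)) c d" by blast
  moreover have "\<bar>fst (g i)\<bar> \<le> M" "\<bar>snd (g i)\<bar> \<le> M" "\<bar>snd (g (Suc i))\<bar> \<le> M"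
    using bound i(1) by auto
  ultimately have "c < M \<and> -M \<le> d \<and> d < M"
    by (auto simp: crosses_ray_def)
  moreover have "-M \<le> c"
  proof (rule ccontr)
    assume far: "\<not> -M \<le> c"
    let ?H = "{p. d + 1 \<le> snd p}"
    have "ray_crossings g N c d = membership_changes g N ?H"
      unfolding ray_crossings_def membership_changes_def
    proof (rule sum.cong)
      fix i assume "i \<in> {..<N}"
      then have "site_adj (g i) (g (Suc i))" "\<bar>fst (g i)\<bar> \<le> M"
        using walk bound by (auto simp: closed_walk_def)
      moreover obtain s1 s2 t1 t2 where "g i = (s1, s2)" "g (Suc i) = (t1, t2)" by fastforce
      ultimately show "of_bool (crosses_ray (g i) (g (Suc i)) c d) =
          (of_bool ((g i \<in> ?H) \<noteq> (g (Suc i) \<in> ?H)) :: nat)"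
        using far unfolding site_adj_iff by (elim disjE) (auto simp: crosses_ray_def)
    qed simp
    then show False
      using even_membership_changes_iff[of g N ?H] walk odd by (simp add: closed_walk_def)
  qed
  ultimately show ?thesis by simp
qed

text \<open>The parity of the number of crossings of the ray from v - (1/2, 1/2) to the right, i.e. the
  inside/outside indicator of the closed walk g on the lattice shifted by (1/2, 1/2) against the
  one carrying g.\<close>
definition winding_parity :: "(nat \<Rightarrow> pt) \<Rightarrow> nat \<Rightarrow> pt \<Rightarrow> bool" where
  "winding_parity g N v \<longleftrightarrow> odd (ray_crossings g N (fst v - 1) (snd v - 1))"

lemma finite_winding_parity:
  assumes walk: "closed_walk g N"
  shows "finite {v. winding_parity g N v}"
proof -
  define M where "M = (\<Sum>i\<le>N. \<bar>fst (g i)\<bar> + \<bar>snd (g i)\<bar>)"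
  have bound: "\<forall>i\<le>N. \<bar>fst (g i)\<bar> \<le> M \<and> \<bar>snd (g i)\<bar> \<le> M"
  proof (intro allI impI)
    fix i assume "i \<le> N"
    then have "\<bar>fst (g i)\<bar> + \<bar>snd (g i)\<bar> \<le> M"
      unfolding M_def by (intro member_le_sum) auto
    then show "\<bar>fst (g i)\<bar> \<le> M \<and> \<bar>snd (g i)\<bar> \<le> M" by auto
  qed
  have "{v. winding_parity g N v} \<subseteq> {-M + 1..M} \<times> {-M + 1..M}"
  proof
    fix v assume "v \<in> {v. winding_parity g N v}"
    then have "odd (ray_crossings g N (fst v - 1) (snd v - 1))" by (simp add: winding_parity_def)
    from odd_ray_crossings_bounded[OF walk bound this] show "v \<in> {-M + 1..M} \<times> {-M + 1..M}"
      by (cases v) auto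
  qed
  then show ?thesis by (rule finite_subset) simp
qed

lemma winding_parity_differs_iff:
  assumes walk: "closed_walk g N" and bis: "bisects p q x y"
  shows "winding_parity g N x \<noteq> winding_parity g N y \<longleftrightarrow> odd (traversals g N {p, q})"
proof -
  let ?W = "winding_parity g N"
  have right: "?W (a, b) \<noteq> ?W (a + 1, b) \<longleftrightarrow> odd (traversals g N {(a, b - 1), (a, b)})" for a b
    using ray_crossings_shift[of g N "a - 1" "b - 1"] by (auto simp: winding_parity_def)
  have up: "?W (a, b) \<noteq> ?W (a, b + 1) \<longleftrightarrow> odd (traversals g N {(a - 1, b), (a, b)})" for a b
    using ray_crossings_even[OF walk, of "a - 1" "b - 1"] by (auto simp: winding_parity_def)
  obtain a b where x: "x = (a, b)" by fastforce
  have "site_adj x y" using bis by (simp add: bisects_def)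
  then consider "y = (a + 1, b)" | "y = (a - 1, b)" | "y = (a, b + 1)" | "y = (a, b - 1)"
    by (auto simp: site_adj_iff x)
  then show ?thesis
  proof cases
    case 1
    then have "bisects (a, b - 1) (a, b) x y" by (simp add: x bisects_iff)
    then show ?thesis using right[of a b] bisects_unique_dual[OF bis] x 1 by simp
  next
    case 2
    then have "bisects (a - 1, b - 1) (a - 1, b) x y" by (simp add: x bisects_iff)
    then show ?thesis using right[of "a - 1" b] bisects_unique_dual[OF bis] x 2 by auto
  next
    case 3
    then have "bisects (a - 1, b) (a, b) x y" by (simp add: x bisects_iff)
    then show ?thesis using up[of a b] bisects_unique_dual[OF bis] x 3 by simp
  next
    case 4
    then have "bisects (a - 1, b - 1) (a, b - 1) x y" by (simp add: x bisects_iff)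
    then show ?thesis using up[of a "b - 1"] bisects_unique_dual[OF bis] x 4 by auto
  qed
qed

lemma winding_parity_eq_if_untraversed:
  assumes "closed_walk g N" "bisects p q x y" "\<forall>i<N. {g i, g (Suc i)} \<noteq> {p, q}"
  shows "winding_parity g N x = winding_parity g N y"
  using winding_parity_differs_iff[OF assms(1,2)] traversed_if_odd_traversals assms(3) by blast

section \<open>Site components and the closure\<close>

lemma site_path_refl: "site_path W a a"
  by (simp add: site_path_def)

lemma site_path_trans: "site_path W a b \<Longrightarrow> site_path W b c \<Longrightarrow> site_path W a c"
  unfolding site_path_def by (rule rtranclp_trans)

lemma site_path_sym: "site_path W a b \<Longrightarrow> site_path W b a"
  unfolding site_path_def
proof (induction rule: rtranclp_induct)
  case (step y z)
  then show ?case by (auto intro: converse_rtranclp_into_rtranclp site_adj_sym)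
qed simp

lemma site_path_mem: "site_path W a b \<Longrightarrow> a \<in> W \<Longrightarrow> b \<in> W"
  unfolding site_path_def by (induction rule: rtranclp_induct) auto

lemma site_path_mono: "site_path W a b \<Longrightarrow> W \<subseteq> W' \<Longrightarrow> site_path W' a b"
  unfolding site_path_def by (induction rule: rtranclp_induct) (auto intro: rtranclp.rtrancl_into_rtrancl)

lemma site_path_invariant:
  assumes "\<And>a b. a \<in> W \<Longrightarrow> b \<in> W \<Longrightarrow> site_adj a b \<Longrightarrow> F a = F b" "site_path W y z"
  shows "F y = F z"
  using assms(2) unfolding site_path_def by (induction rule: rtranclp_induct) (use assms(1) in auto)

lemma ex_site_walk:
  assumes "site_path W x y"
  obtains n \<gamma> where "\<gamma> 0 = x" "\<gamma> n = y" "\<forall>i<n. \<gamma> i \<in> W \<and> \<gamma> (Suc i) \<in> W \<and> site_adj (\<gamma> i) (\<gamma> (Suc i))"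
  using assms unfolding site_path_def rtranclp_power relpowp_fun_conv by blast

definition site_comp :: "pt set \<Rightarrow> pt \<Rightarrow> pt set" where
  "site_comp W y = {z. site_path W y z}"

lemma site_path_site_comp:
  assumes "site_path W y z"
  shows "site_path (site_comp W y) y z"
  using assms unfolding site_path_def
proof (induction rule: rtranclp_induct)
  case base then show ?case by simp
next
  case (step b c)
  then have "b \<in> site_comp W y" "c \<in> site_comp W y"
    by (auto simp: site_comp_def site_path_def intro: rtranclp.rtrancl_into_rtrancl)
  with step show ?case by (auto intro: rtranclp.rtrancl_into_rtrancl)
qed

lemma site_component_site_comp:
  assumes "y \<in> W"
  shows "site_component W (site_comp W y)"
proof -
  have y: "y \<in> site_comp W y" by (simp add: site_comp_def site_path_refl)
  have "site_comp W y \<subseteq> W"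
    using site_path_mem[of W y] assms by (auto simp: site_comp_def)
  moreover have "site_connected (site_comp W y)"
    unfolding site_connected_def
  proof (intro ballI)
    fix a b assume "a \<in> site_comp W y" "b \<in> site_comp W y"
    then have "site_path (site_comp W y) y a" "site_path (site_comp W y) y b"
      using site_path_site_comp by (auto simp: site_comp_def)
    then show "site_path (site_comp W y) a b" by (metis site_path_sym site_path_trans)
  qed
  moreover have "D \<subseteq> site_comp W y" if "y \<in> D" "D \<subseteq> W" "site_connected D" for D
  proof
    fix z assume "z \<in> D"
    with that have "site_path D y z" by (simp add: site_connected_def)
    with that show "z \<in> site_comp W y" by (simp add: site_comp_def site_path_mono)
  qed
  ultimately show ?thesis
    using y unfolding site_component_def by blast
qed

lemma site_component_eq_site_comp:
  assumes "site_component W C" "y \<in> C"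
  shows "C = site_comp W y"
proof -
  have "C \<subseteq> site_comp W y"
  proof
    fix z assume "z \<in> C"
    with assms have "site_path C y z" by (simp add: site_component_def site_connected_def)
    with assms show "z \<in> site_comp W y" by (simp add: site_comp_def site_component_def site_path_mono)
  qed
  moreover have "y \<in> W" using assms by (auto simp: site_component_def)
  ultimately show ?thesis
    using assms(1) site_component_site_comp[of y W] unfolding site_component_def by blast
qed

lemma site_comp_eq: "site_path W y z \<Longrightarrow> site_comp W z = site_comp W y"
  unfolding site_comp_def by (auto intro: site_path_trans site_path_sym)

lemma lattice_closure_iff: "y \<in> lattice_closure V \<longleftrightarrow> y \<in> V \<or> finite (site_comp (- V) y)"
proof
  assume "y \<in> lattice_closure V"
  then show "y \<in> V \<or> finite (site_comp (- V) y)"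
    unfolding lattice_closure_def using site_component_eq_site_comp by blast
next
  have "y \<in> site_comp (- V) y" by (simp add: site_comp_def site_path_refl)
  moreover assume "y \<in> V \<or> finite (site_comp (- V) y)"
  ultimately show "y \<in> lattice_closure V"
    unfolding lattice_closure_def using site_component_site_comp[of y "- V"] by blast
qed

lemma subset_lattice_closure: "V \<subseteq> lattice_closure V"
  by (auto simp: lattice_closure_def)

lemma mem_if_adjacent_outside_lattice_closure:
  assumes "x \<in> lattice_closure V" "y \<notin> lattice_closure V" "site_adj x y"
  shows "x \<in> V"
proof (rule ccontr)
  assume "x \<notin> V"
  moreover have "y \<notin> V" using assms(2) subset_lattice_closure by auto
  ultimately have "site_path (- V) x y"
    unfolding site_path_def using assms(3) by (intro r_into_rtranclp) simp
  then have "site_comp (- V) y = site_comp (- V) x" by (rule site_comp_eq)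
  then show False using assms \<open>x \<notin> V\<close> lattice_closure_iff by metis
qed

lemma infinite_component_outside_lattice_closure:
  assumes "y \<notin> lattice_closure V"
  obtains C where "y \<in> C" "C \<subseteq> - V" "site_connected C" "infinite C"
proof
  have "y \<in> - V" using assms subset_lattice_closure by auto
  then show "site_comp (- V) y \<subseteq> - V" "site_connected (site_comp (- V) y)"
    using site_component_site_comp[of y "- V"] by (auto simp: site_component_def)
  show "y \<in> site_comp (- V) y" by (simp add: site_comp_def site_path_refl)
  show "infinite (site_comp (- V) y)" using assms lattice_closure_iff by blast
qed

lemma finitely_supported_vanishes_on_infinite_connected:
  assumes fin: "finite {v. F v}" and W: "infinite W" "site_connected W"
    and inv: "\<And>a b. a \<in> W \<Longrightarrow> b \<in> W \<Longrightarrow> site_adj a b \<Longrightarrow> F a = F b"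
    and z: "z \<in> W"
  shows "\<not> F z"
proof
  assume "F z"
  have "F w" if "w \<in> W" for w
  proof -
    have "site_path W z w" using W(2) z that by (simp add: site_connected_def)
    then have "F z = F w" by (rule site_path_invariant[rotated]) (rule inv)
    with \<open>F z\<close> show ?thesis by simp
  qed
  then have "W \<subseteq> {v. F v}" by blast
  with fin W(1) show False using finite_subset by blast
qed

lemma finitely_supported_vanishes_outside_lattice_closure:
  assumes fin: "finite {v. F v}"
    and inv: "\<And>a b. a \<notin> V \<Longrightarrow> b \<notin> V \<Longrightarrow> site_adj a b \<Longrightarrow> F a = F b"
    and y: "y \<notin> lattice_closure V"
  shows "\<not> F y"
proof -
  obtain C where C: "y \<in> C" "C \<subseteq> - V" "site_connected C" "infinite C"
    using infinite_component_outside_lattice_closure[OF y] .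
  show ?thesis
  proof (rule finitely_supported_vanishes_on_infinite_connected[OF fin C(4,3) _ C(1)])
    fix a b assume "a \<in> C" "b \<in> C" "site_adj a b"
    with C(2) show "F a = F b" using inv by blast
  qed
qed

section \<open>No circuits around an infinite set\<close>

lemma B_edge_sym: "B_edge V p q \<Longrightarrow> B_edge V q p"
  using bisects_swap_dual unfolding B_edge_def by blast

lemma B_edge_irrefl: "\<not> B_edge V p p"
  by (auto simp: B_edge_def bisects_def dual_adj_def site_adj_def)

lemma B_edge_site_adj: "B_edge V p q \<Longrightarrow> site_adj p q"
  by (auto simp: B_edge_def bisects_def dual_adj_def)

lemma B_edge_separates:
  assumes "B_edge V p q" "bisects p q x y"
  shows "x \<in> lattice_closure V \<longleftrightarrow> y \<notin> lattice_closure V"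
proof -
  obtain x' y' where "bisects p q x' y'"
    "x' \<in> lattice_closure V \<longleftrightarrow> y' \<notin> lattice_closure V"
    using assms(1) unfolding B_edge_def by blast
  with bisects_unique_primal[OF this(1) assms(2)] show ?thesis
    by (auto simp: doubleton_eq_iff)
qed

lemma winding_parity_B_walk_eq:
  assumes walk: "closed_walk g N" and B: "\<forall>i<N. B_edge V (g i) (g (Suc i))"
    and adj: "site_adj x y" and same_side: "x \<in> lattice_closure V \<longleftrightarrow> y \<in> lattice_closure V"
  shows "winding_parity g N x = winding_parity g N y"
proof -
  obtain p q where bis: "bisects p q x y" using ex_bisects[OF adj] by blast
  have "\<not> B_edge V p q" using B_edge_separates[OF _ bis] same_side by blast
  moreover have "B_edge V (g i) (g (Suc i))" "B_edge V (g (Suc i)) (g i)" if "i < N" for i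
    using B that B_edge_sym by blast+
  ultimately have "{g i, g (Suc i)} \<noteq> {p, q}" if "i < N" for i
    using that by (auto simp: doubleton_eq_iff)
  then show ?thesis using winding_parity_eq_if_untraversed[OF walk bis] by blast
qed

lemma traversals_circuit_first_edge:
  assumes "n \<ge> 3" and inj: "inj_on c {..<n}"
  shows "traversals (\<lambda>i. c (i mod n)) n {c 0, c 1} = 1"
proof -
  have "{c i, c (Suc i mod n)} = {c 0, c 1} \<longleftrightarrow> i = 0" if "i < n" for i
  proof
    assume edge: "{c i, c (Suc i mod n)} = {c 0, c 1}"
    show "i = 0"
    proof (rule ccontr)
      assume "i \<noteq> 0"
      with that inj assms(1) have "c i \<noteq> c 0" by (auto dest: inj_onD)
      with edge have "c i = c 1" "c (Suc i mod n) = c 0" by (auto simp: doubleton_eq_iff)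
      with that inj assms(1) have "i = 1" "c 2 = c 0" by (auto dest: inj_onD simp: numeral_2_eq_2)
      with inj assms(1) show False by (auto dest: inj_onD)
    qed
  qed (use assms(1) in simp)
  then have "traversals (\<lambda>i. c (i mod n)) n {c 0, c 1} = (\<Sum>i<n. of_bool (i = 0))"
    unfolding traversals_def by (intro sum.cong) auto
  also have "\<dots> = 1" using assms(1) by simp
  finally show ?thesis .
qed

lemma no_circuit_if_infinite:
  assumes conn: "site_connected V" and inf: "infinite V" and circ: "is_circuit (B_edge V) n c"
  shows False
proof -
  define L where "L = lattice_closure V"
  define g where "g = (\<lambda>i. c (i mod n))"
  define F where "F = winding_parity g n"
  have n: "n \<ge> 3" and inj: "inj_on c {..<n}" and B: "\<forall>i<n. B_edge V (g i) (g (Suc i))"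
    using circ by (auto simp: is_circuit_def g_def)
  then have walk: "closed_walk g n"
    by (auto simp: closed_walk_def g_def B_edge_site_adj)
  have fin: "finite {v. F v}" unfolding F_def by (rule finite_winding_parity[OF walk])
  have F_inv: "F a = F b" if "site_adj a b" "a \<in> L \<longleftrightarrow> b \<in> L" for a b
    using winding_parity_B_walk_eq[OF walk B that[unfolded L_def]] by (simp add: F_def)
  have F_V: "\<not> F z" if "z \<in> V" for z
  proof (rule finitely_supported_vanishes_on_infinite_connected[OF fin inf conn _ that])
    fix a b assume "a \<in> V" "b \<in> V" "site_adj a b"
    then show "F a = F b" using F_inv subset_lattice_closure[of V] unfolding L_def by blast
  qed
  have F_outside: "\<not> F y" if "y \<notin> L" for y
  proof (rule finitely_supported_vanishes_outside_lattice_closure[OF fin _ that[unfolded L_def]])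
    fix a b assume "a \<notin> V" "b \<notin> V" "site_adj a b"
    then have "a \<in> L \<longleftrightarrow> b \<in> L"
      using mem_if_adjacent_outside_lattice_closure site_adj_sym unfolding L_def by metis
    with \<open>site_adj a b\<close> show "F a = F b" by (rule F_inv)
  qed
  have "B_edge V (c 0) (c 1)" using B[rule_format, of 0] n by (simp add: g_def)
  then obtain x y where bis: "bisects (c 0) (c 1) x y" and "x \<in> L" "y \<notin> L"
    unfolding B_edge_def L_def by (metis bisects_swap_primal)
  then have "x \<in> V"
    using mem_if_adjacent_outside_lattice_closure bisects_def unfolding L_def by metis
  moreover have "F x \<noteq> F y"
    using winding_parity_differs_iff[OF walk bis] traversals_circuit_first_edge[OF n inj]
    by (simp add: F_def g_def)
  ultimately show False using F_V F_outside \<open>y \<notin> L\<close> by blast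
qed

section \<open>Vertex degrees of the dual edge boundary\<close>

lemma bisects_shares_endpoint: "bisects p q x y \<Longrightarrow> p \<in> {x, y} \<or> q \<in> {x, y}"
  by (cases p) (auto simp: bisects_iff)

lemma detour_closed_walk:
  assumes conn: "site_connected V" and "x \<in> V" "z \<in> V"
    and zw: "site_adj z w" and wx: "site_adj w x"
  obtains g N where "closed_walk g N"
    "\<And>e. \<not> e \<subseteq> V \<Longrightarrow> traversals g N e = of_bool ({z, w} = e) + of_bool ({w, x} = e)"
proof -
  have "site_path V x z" using conn assms(2,3) by (simp add: site_connected_def)
  then obtain n \<gamma> where \<gamma>: "\<gamma> 0 = x" "\<gamma> n = z" "\<forall>i<n. \<gamma> i \<in> V \<and> \<gamma> (Suc i) \<in> V \<and> site_adj (\<gamma> i) (\<gamma> (Suc i))"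
    by (rule ex_site_walk)
  define g where "g = (\<lambda>i. if i \<le> n then \<gamma> i else if i = Suc n then w else x)"
  have "closed_walk g (n + 2)"
    unfolding closed_walk_def
  proof
    show "\<forall>i<n + 2. site_adj (g i) (g (Suc i))"
    proof (intro allI impI)
      fix i assume "i < n + 2"
      then consider "i < n" | "i = n" | "i = Suc n" by linarith
      then show "site_adj (g i) (g (Suc i))"
      proof cases
        case 1
        then show ?thesis using \<gamma>(3) by (simp add: g_def)
      next
        case 2
        then show ?thesis using \<gamma>(2) zw by (simp add: g_def)
      next
        case 3
        then show ?thesis using wx by (simp add: g_def)
      qed
    qed
    show "g (n + 2) = g 0" using \<gamma> by (simp add: g_def)
  qed
  moreover have "traversals g (n + 2) e = of_bool ({z, w} = e) + of_bool ({w, x} = e)" if "\<not> e \<subseteq> V" for e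
  proof -
    have "{g i, g (Suc i)} \<subseteq> V" if "i < n" for i
      using \<gamma>(3) that by (simp add: g_def)
    then have "traversals g n e = 0"
      unfolding traversals_def using \<open>\<not> e \<subseteq> V\<close> by (intro sum.neutral ballI) auto
    moreover have "g n = z" "g (Suc n) = w" "g (Suc (Suc n)) = x"
      using \<gamma>(2) by (simp_all add: g_def)
    moreover have "traversals g (n + 2) e =
        traversals g n e + of_bool ({g n, g (Suc n)} = e) + of_bool ({g (Suc n), g (Suc (Suc n))} = e)"
      by (simp add: traversals_def)
    ultimately show ?thesis by simp
  qed
  ultimately show ?thesis by (rule that)
qed

text \<open>F is the parity of the walk from x through V to z and back via w. Its only steps leaving V
  are z-w and w-x, and the hypotheses keep the edges they cross away from the complement of V.\<close>
lemma detour_separation: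
  assumes conn: "site_connected V" and V: "x \<in> V" "z \<in> V" "x \<noteq> z"
    and zw: "site_adj z w" "\<And>a b. bisects z w a b \<Longrightarrow> a \<in> V \<or> b \<in> V"
    and wx: "site_adj w x" "\<And>a b. bisects w x a b \<Longrightarrow> a \<in> V \<or> b \<in> V"
  obtains F where "\<And>y. y \<notin> lattice_closure V \<Longrightarrow> \<not> F y"
    "\<And>p q a b. bisects p q a b \<Longrightarrow> \<not> {p, q} \<subseteq> V \<Longrightarrow>
       F a \<noteq> F b \<longleftrightarrow> {p, q} = {z, w} \<or> {p, q} = {w, x}"
proof -
  obtain g N where walk: "closed_walk g N"
    and trav: "\<And>e. \<not> e \<subseteq> V \<Longrightarrow> traversals g N e = of_bool ({z, w} = e) + of_bool ({w, x} = e)"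
    using detour_closed_walk[OF conn V(1,2) zw(1) wx(1)] by metis
  define F where "F = winding_parity g N"
  have "{z, w} \<noteq> {w, x}" using V(3) by (auto simp: doubleton_eq_iff)
  then have odd_iff: "odd (of_bool ({z, w} = e) + of_bool ({w, x} = e) :: nat) \<longleftrightarrow> e = {z, w} \<or> e = {w, x}"
    for e by auto
  have differs: "F a \<noteq> F b \<longleftrightarrow> {p, q} = {z, w} \<or> {p, q} = {w, x}"
    if bis: "bisects p q a b" and crossing: "\<not> {p, q} \<subseteq> V" for p q a b
    using winding_parity_differs_iff[OF walk bis] trav[OF crossing] odd_iff unfolding F_def
    by presburger
  have "F a = F b" if ab: "a \<notin> V" "b \<notin> V" "site_adj a b" for a b
  proof -
    obtain p q where bis: "bisects p q a b" using ex_bisects[OF ab(3)] by blast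
    have avoids: "{p, q} \<noteq> {u, v}" if touches: "\<And>s t. bisects u v s t \<Longrightarrow> s \<in> V \<or> t \<in> V" for u v
    proof
      assume "{p, q} = {u, v}"
      with bis have "bisects u v a b" by (metis doubleton_eq_iff bisects_swap_dual)
      with touches ab(1,2) show False by blast
    qed
    have "\<not> {p, q} \<subseteq> V" using bisects_shares_endpoint[OF bis] ab(1,2) by blast
    then show ?thesis using differs[OF bis] avoids[OF zw(2)] avoids[OF wx(2)] by blast
  qed
  then have "\<not> F y" if y: "y \<notin> lattice_closure V" for y
    using finitely_supported_vanishes_outside_lattice_closure[OF finite_winding_parity[OF walk] _ y]
    unfolding F_def by blast
  then show ?thesis using differs by (rule that)
qed

lemma no_diagonal_checkerboard:
  assumes conn: "site_connected V"
    and "(a, b) \<in> lattice_closure V" "(a + 1, b + 1) \<in> lattice_closure V"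
      "(a + 1, b) \<notin> lattice_closure V" "(a, b + 1) \<notin> lattice_closure V"
  shows False
proof -
  have V: "(a, b) \<in> V" "(a + 1, b + 1) \<in> V"
    using mem_if_adjacent_outside_lattice_closure[OF _ assms(5)] assms(2,3) by (auto simp: site_adj_def)
  have not_V: "(a + 1, b) \<notin> V" "(a, b + 1) \<notin> V" using assms(4,5) subset_lattice_closure by blast+
  have zw: "site_adj (a + 1, b + 1) (a + 1, b)" "\<And>s t. bisects (a + 1, b + 1) (a + 1, b) s t \<Longrightarrow> s \<in> V \<or> t \<in> V"
    using V by (auto simp: site_adj_def bisects_iff)
  have wx: "site_adj (a + 1, b) (a, b)" "\<And>s t. bisects (a + 1, b) (a, b) s t \<Longrightarrow> s \<in> V \<or> t \<in> V"
    using V by (auto simp: site_adj_def bisects_iff)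
  obtain F where outside: "\<And>y. y \<notin> lattice_closure V \<Longrightarrow> \<not> F y"
    and differs: "\<And>p q s t. bisects p q s t \<Longrightarrow> \<not> {p, q} \<subseteq> V \<Longrightarrow>
       F s \<noteq> F t \<longleftrightarrow> {p, q} = {(a + 1, b + 1), (a + 1, b)} \<or> {p, q} = {(a + 1, b), (a, b)}"
    using detour_separation[OF conn V _ zw wx] by auto
  have "F (a, b + 1) = F (a + 1, b + 1)"
    using differs[of "(a, b)" "(a, b + 1)" "(a, b + 1)" "(a + 1, b + 1)"] not_V
    by (simp add: bisects_iff doubleton_eq_iff)
  moreover have "F (a + 1, b) \<noteq> F (a + 1, b + 1)"
    using differs[of "(a, b)" "(a + 1, b)" "(a + 1, b)" "(a + 1, b + 1)"] not_V
    by (simp add: bisects_iff insert_commute)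
  ultimately show False using outside assms(4,5) by blast
qed

lemma no_antidiagonal_checkerboard:
  assumes conn: "site_connected V"
    and "(a + 1, b) \<in> lattice_closure V" "(a, b + 1) \<in> lattice_closure V"
      "(a, b) \<notin> lattice_closure V" "(a + 1, b + 1) \<notin> lattice_closure V"
  shows False
proof -
  have V: "(a + 1, b) \<in> V" "(a, b + 1) \<in> V"
    using mem_if_adjacent_outside_lattice_closure[OF _ assms(4)] assms(2,3) by (auto simp: site_adj_def)
  have not_V: "(a, b) \<notin> V" using assms(4) subset_lattice_closure by blast
  have zw: "site_adj (a, b + 1) (a, b)" "\<And>s t. bisects (a, b + 1) (a, b) s t \<Longrightarrow> s \<in> V \<or> t \<in> V"
    using V by (auto simp: site_adj_def bisects_iff)
  have wx: "site_adj (a, b) (a + 1, b)" "\<And>s t. bisects (a, b) (a + 1, b) s t \<Longrightarrow> s \<in> V \<or> t \<in> V"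
    using V by (auto simp: site_adj_def bisects_iff)
  obtain F where outside: "\<And>y. y \<notin> lattice_closure V \<Longrightarrow> \<not> F y"
    and differs: "\<And>p q s t. bisects p q s t \<Longrightarrow> \<not> {p, q} \<subseteq> V \<Longrightarrow>
       F s \<noteq> F t \<longleftrightarrow> {p, q} = {(a, b + 1), (a, b)} \<or> {p, q} = {(a, b), (a + 1, b)}"
    using detour_separation[OF conn V _ zw wx] by auto
  have "F (a, b) = F (a + 1, b)"
    using differs[of "(a, b - 1)" "(a, b)" "(a, b)" "(a + 1, b)"] not_V
    by (simp add: bisects_iff doubleton_eq_iff)
  moreover have "F (a + 1, b) \<noteq> F (a + 1, b + 1)"
    using differs[of "(a, b)" "(a + 1, b)" "(a + 1, b)" "(a + 1, b + 1)"] not_V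
    by (simp add: bisects_iff)
  ultimately show False using outside assms(4,5) by blast
qed

lemma B_edge_iff:
  "B_edge V (a, b) q \<longleftrightarrow>
    q = (a + 1, b) \<and> ((a + 1, b) \<in> lattice_closure V) \<noteq> ((a + 1, b + 1) \<in> lattice_closure V) \<or>
    q = (a - 1, b) \<and> ((a, b) \<in> lattice_closure V) \<noteq> ((a, b + 1) \<in> lattice_closure V) \<or>
    q = (a, b + 1) \<and> ((a, b + 1) \<in> lattice_closure V) \<noteq> ((a + 1, b + 1) \<in> lattice_closure V) \<or>
    q = (a, b - 1) \<and> ((a, b) \<in> lattice_closure V) \<noteq> ((a + 1, b) \<in> lattice_closure V)"
  unfolding B_edge_def bisects_iff by auto

lemma card_four_neighbours:
  fixes a b :: int
  shows "card {q. q = (a + 1, b) \<and> P1 \<or> q = (a - 1, b) \<and> P2 \<or> q = (a, b + 1) \<and> P3 \<or> q = (a, b - 1) \<and> P4}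
    = of_bool P1 + of_bool P2 + of_bool P3 + of_bool P4"
  by (cases P1; cases P2; cases P3; cases P4) (simp_all add: Collect_disj_eq)

lemma B_degree_eq_2:
  assumes conn: "site_connected V" and p: "p \<in> B_verts V"
  shows "B_degree V p = 2"
proof -
  obtain a b where p_eq: "p = (a, b)" by fastforce
  define X where "X = ((a, b) \<in> lattice_closure V)"
  define W where "W = ((a + 1, b) \<in> lattice_closure V)"
  define Z where "Z = ((a + 1, b + 1) \<in> lattice_closure V)"
  define U where "U = ((a, b + 1) \<in> lattice_closure V)"
  have "B_degree V p =
      card {q. q = (a + 1, b) \<and> W \<noteq> Z \<or> q = (a - 1, b) \<and> X \<noteq> U \<or> q = (a, b + 1) \<and> U \<noteq> Z \<or> q = (a, b - 1) \<and> X \<noteq> W}"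
    unfolding B_degree_def p_eq B_edge_iff X_def W_def Z_def U_def ..
  also have "\<dots> = of_bool (W \<noteq> Z) + of_bool (X \<noteq> U) + of_bool (U \<noteq> Z) + of_bool (X \<noteq> W)"
    by (rule card_four_neighbours)
  finally have deg: "B_degree V p = of_bool (W \<noteq> Z) + of_bool (X \<noteq> U) + of_bool (U \<noteq> Z) + of_bool (X \<noteq> W)" .
  obtain q where "B_edge V p q" using p by (auto simp: B_verts_def)
  then have "of_bool (W \<noteq> Z) + of_bool (X \<noteq> U) + of_bool (U \<noteq> Z) + of_bool (X \<noteq> W) \<noteq> (0 :: nat)"
    unfolding p_eq B_edge_iff X_def W_def Z_def U_def by auto
  moreover have "\<not> (X \<and> Z \<and> \<not> W \<and> \<not> U)"
    using no_diagonal_checkerboard[OF conn, of a b] unfolding X_def W_def Z_def U_def by blast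
  moreover have "\<not> (W \<and> U \<and> \<not> X \<and> \<not> Z)"
    using no_antidiagonal_checkerboard[OF conn, of a b] unfolding X_def W_def Z_def U_def by blast
  ultimately show ?thesis unfolding deg by (cases X; cases W; cases Z; cases U) auto
qed

section \<open>Graphs of degree two\<close>

lemma card_2_other_neighbour:
  assumes "card {c. E a c} = 2" "E a b"
  obtains c where "E a c" "c \<noteq> b"
  using assms unfolding card_2_iff by (metis insertI1 insert_commute mem_Collect_eq)

lemma card_2_neighbours_iff:
  assumes "card {c. E a c} = 2" "E a b" "E a c" "b \<noteq> c"
  shows "E a v \<longleftrightarrow> v = b \<or> v = c"
proof -
  obtain x y where "{c. E a c} = {x, y}"
    using assms(1) unfolding card_2_iff by blast
  with assms(2-4) show ?thesis by (auto simp: set_eq_iff)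
qed

locale degree_two_graph =
  fixes E :: "pt \<Rightarrow> pt \<Rightarrow> bool"
  assumes sym: "E a b \<Longrightarrow> E b a"
    and irrefl: "\<not> E a a"
    and degree: "E a b \<Longrightarrow> card {c. E a c} = 2"
begin

lemma neighbours_iff:
  assumes "E a b" "E a c" "b \<noteq> c"
  shows "E a v \<longleftrightarrow> v = b \<or> v = c"
  using card_2_neighbours_iff[where E = E, OF degree[OF assms(1)] assms] .

lemma other_neighbour:
  assumes "E a b"
  obtains c where "E a c" "c \<noteq> b"
  using card_2_other_neighbour[where E = E, OF degree[OF assms] assms] by blast

lemma circuit_neighbours:
  assumes circ: "is_circuit E n c" and u: "u \<in> c ` {..<n}"
  shows "E u v \<longleftrightarrow> (\<exists>i<n. u = c i \<and> v = c ((i + 1) mod n) \<or> v = c i \<and> u = c ((i + 1) mod n))"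
proof
  assume "\<exists>i<n. u = c i \<and> v = c ((i + 1) mod n) \<or> v = c i \<and> u = c ((i + 1) mod n)"
  with circ show "E u v" by (auto simp: is_circuit_def intro: sym)
next
  assume uv: "E u v"
  have n: "n \<ge> 3" and inj: "inj_on c {..<n}" and edge: "\<And>i. i < n \<Longrightarrow> E (c i) (c ((i + 1) mod n))"
    using circ by (auto simp: is_circuit_def)
  obtain k where k: "k < n" "u = c k" using u by blast
  define k' where "k' = (if k = 0 then n - 1 else k - 1)"
  have k': "k' < n" "(k' + 1) mod n = k"
    using k(1) n by (auto simp: k'_def)
  have "(k + 1) mod n \<noteq> k'"
  proof (cases "k + 1 < n")
    case False
    with k(1) have "k + 1 = n" by simp
    with n show ?thesis by (auto simp: k'_def)
  qed (use n in \<open>auto simp: k'_def\<close>)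
  then have "c ((k + 1) mod n) \<noteq> c k'"
    using inj k'(1) n by (auto dest: inj_onD)
  moreover have "E u (c ((k + 1) mod n))" "E u (c k')"
    using edge[OF k(1)] edge[OF k'(1)] k k'(2) by (auto intro: sym)
  ultimately have "v = c ((k + 1) mod n) \<or> v = c k'"
    using neighbours_iff uv by blast
  then show "\<exists>i<n. u = c i \<and> v = c ((i + 1) mod n) \<or> v = c i \<and> u = c ((i + 1) mod n)"
    using k k' by metis
qed

lemma biinf_path_neighbours:
  assumes path: "is_biinf_path E f" and u: "u \<in> range f"
  shows "E u v \<longleftrightarrow> (\<exists>i. u = f i \<and> v = f (i + 1) \<or> v = f i \<and> u = f (i + 1))"
proof
  assume "\<exists>i. u = f i \<and> v = f (i + 1) \<or> v = f i \<and> u = f (i + 1)"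
  with path show "E u v" by (auto simp: is_biinf_path_def intro: sym)
next
  assume uv: "E u v"
  obtain k where k: "u = f k" using u by blast
  have "f (k + 1) \<noteq> f (k - 1)"
    using path by (auto simp: is_biinf_path_def dest: injD)
  moreover have "E (f (k - 1)) (f k)"
    using path unfolding is_biinf_path_def by (metis diff_add_cancel)
  then have "E u (f (k + 1))" "E u (f (k - 1))"
    using path k sym by (auto simp: is_biinf_path_def)
  ultimately have "v = f (k + 1) \<or> v = f (k - 1)"
    using neighbours_iff uv by blast
  then show "\<exists>i. u = f i \<and> v = f (i + 1) \<or> v = f i \<and> u = f (i + 1)"
    using k by (metis diff_add_cancel)
qed

fun walk_from :: "pt \<Rightarrow> pt \<Rightarrow> nat \<Rightarrow> pt" where
  "walk_from p q 0 = p"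
| "walk_from p q (Suc 0) = q"
| "walk_from p q (Suc (Suc k)) = (SOME r. E (walk_from p q (Suc k)) r \<and> r \<noteq> walk_from p q k)"

declare walk_from.simps(3) [simp del]

lemma next_neighbour:
  assumes "E u v"
  shows "E v (SOME r. E v r \<and> r \<noteq> u) \<and> (SOME r. E v r \<and> r \<noteq> u) \<noteq> u"
proof -
  have "E v u" using sym[OF assms] .
  then obtain r where "E v r" "r \<noteq> u" by (rule other_neighbour)
  then show ?thesis by (rule someI[where P = "\<lambda>r. E v r \<and> r \<noteq> u", OF conjI])
qed

lemma walk_from_edge:
  assumes "E p q"
  shows "E (walk_from p q k) (walk_from p q (Suc k))"
proof (induction k)
  case 0
  then show ?case using assms by simp
next
  case (Suc k)
  then show ?case using next_neighbour by (simp add: walk_from.simps(3))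
qed

lemma walk_from_nonbacktracking:
  assumes "E p q"
  shows "walk_from p q (Suc (Suc k)) \<noteq> walk_from p q k"
  using next_neighbour[OF walk_from_edge[OF assms, of k]] by (simp add: walk_from.simps(3))

lemma walk_from_neighbours:
  assumes "E p q" "inj (walk_from p q)"
  shows "E (walk_from p q (Suc i)) v \<longleftrightarrow> v = walk_from p q i \<or> v = walk_from p q (Suc (Suc i))"
proof (rule neighbours_iff)
  show "E (walk_from p q (Suc i)) (walk_from p q i)"
    using walk_from_edge[OF assms(1)] sym by blast
  show "E (walk_from p q (Suc i)) (walk_from p q (Suc (Suc i)))"
    using walk_from_edge[OF assms(1)] .
  show "walk_from p q i \<noteq> walk_from p q (Suc (Suc i))"
    using assms(2) by (auto dest: injD)
qed

text \<open>A vertex of degree two cannot be revisited from a third direction, so the first repetition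
  of the walk closes it up at its starting point.\<close>
lemma walk_from_first_repetition:
  assumes pq: "E p q" and ij: "i < j" "walk_from p q i = walk_from p q j"
    and inj: "inj_on (walk_from p q) {..<j}"
  shows "i = 0 \<and> 3 \<le> j"
proof -
  let ?f = "walk_from p q"
  have "j \<noteq> Suc i" using walk_from_edge[OF pq, of i] irrefl ij(2) by metis
  moreover have "j \<noteq> Suc (Suc i)" using walk_from_nonbacktracking[OF pq, of i] ij(2) by metis
  ultimately obtain j' where j': "j = Suc j'" "Suc i < j'" using ij(1) by (cases j) auto
  have "i = 0"
  proof (rule ccontr)
    assume "i \<noteq> 0"
    then obtain i' where i': "i = Suc i'" by (cases i) auto
    have "E (?f i) (?f i')" "E (?f i) (?f (Suc i))"
      using walk_from_edge[OF pq] sym i' by auto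
    moreover have "?f i' \<noteq> ?f (Suc i)" using walk_from_nonbacktracking[OF pq, of i'] i' by simp
    ultimately have "E (?f i) v \<longleftrightarrow> v = ?f i' \<or> v = ?f (Suc i)" for v
      by (rule neighbours_iff)
    moreover have "E (?f i) (?f j')" using walk_from_edge[OF pq, of j'] sym ij(2) j'(1) by auto
    moreover have "?f j' \<noteq> ?f i'" "?f j' \<noteq> ?f (Suc i)"
      using inj_onD[OF inj] i' j' by fastforce+
    ultimately show False by blast
  qed
  with j' show ?thesis by simp
qed

lemma circuit_if_not_inj:
  assumes pq: "E p q" and not_inj: "\<not> inj (walk_from p q)"
  shows "\<exists>n c. is_circuit E n c \<and> p \<in> c ` {..<n}"
proof -
  let ?f = "walk_from p q"
  let ?P = "\<lambda>j. \<exists>i<j. ?f i = ?f j"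
  have "\<exists>j. ?P j" using not_inj unfolding inj_def by (metis linorder_neqE_nat)
  then obtain j where "?P j" and minimal: "\<And>j'. j' < j \<Longrightarrow> \<not> ?P j'"
    unfolding exists_least_iff[of ?P] by blast
  then obtain i where i: "i < j" "?f i = ?f j" by blast
  have inj: "inj_on ?f {..<j}"
    using minimal by (intro inj_onI) (metis lessThan_iff linorder_neqE_nat)
  from walk_from_first_repetition[OF pq i inj] i have j: "3 \<le> j" "?f j = ?f 0" by auto
  have "E (?f k) (?f ((k + 1) mod j))" if "k < j" for k
  proof (cases "k + 1 < j")
    case False
    with that have "k + 1 = j" by simp
    then show ?thesis using walk_from_edge[OF pq, of k] j(2) by simp
  qed (use walk_from_edge[OF pq] in simp)
  with j(1) inj have "is_circuit E j ?f" by (simp add: is_circuit_def)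
  moreover have "p \<in> ?f ` {..<j}" using j(1) by (force intro: image_eqI[of _ _ 0])
  ultimately show ?thesis by blast
qed

lemma walk_from_rays_disjoint:
  assumes pq1: "E p q1" and pq2: "E p q2" and ne: "q1 \<noteq> q2"
    and inj1: "inj (walk_from p q1)" and inj2: "inj (walk_from p q2)"
  shows "walk_from p q1 (Suc i) \<noteq> walk_from p q2 (Suc j)"
proof (induction j arbitrary: i)
  let ?f = "walk_from p q1" and ?g = "walk_from p q2"
  note f_nbrs = walk_from_neighbours[OF pq1 inj1]
  case 0
  show ?case
  proof
    assume meet: "?f (Suc i) = ?g (Suc 0)"
    then have "E (?f (Suc i)) p" using sym[OF pq2] by simp
    then have "p = ?f i \<or> p = ?f (Suc (Suc i))" using f_nbrs by blast
    then have "i = 0" using inj1 by (metis walk_from.simps(1) injD nat.distinct(1))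
    with meet ne show False by simp
  qed
next
  let ?f = "walk_from p q1" and ?g = "walk_from p q2"
  note f_nbrs = walk_from_neighbours[OF pq1 inj1]
  case (Suc j)
  show ?case
  proof
    assume meet: "?f (Suc i) = ?g (Suc (Suc j))"
    have "E (?f (Suc i)) (?g (Suc j))" using walk_from_edge[OF pq2, of "Suc j"] sym meet by simp
    then have "?g (Suc j) = ?f i \<or> ?g (Suc j) = ?f (Suc (Suc i))" using f_nbrs by blast
    then show False
    proof
      assume prev: "?g (Suc j) = ?f i"
      show False
      proof (cases i)
        case 0
        with prev have "?g (Suc j) = ?g 0" by simp
        with inj2 show False by (metis injD nat.distinct(1))
      next
        case (Suc i')
        with prev Suc.IH show False by metis
      qed
    qed (use Suc.IH in metis)
  qed
qed

lemma biinf_path_if_inj: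
  assumes pq1: "E p q1" and pq2: "E p q2" and ne: "q1 \<noteq> q2"
    and inj1: "inj (walk_from p q1)" and inj2: "inj (walk_from p q2)"
  shows "\<exists>h. is_biinf_path E h \<and> p \<in> range h"
proof -
  let ?f = "walk_from p q1" and ?g = "walk_from p q2"
  define h where "h k = (if 0 \<le> k then ?f (nat k) else ?g (nat (- k)))" for k :: int
  have disjoint: "?f a \<noteq> ?g b" if "0 < b" for a b
  proof (cases a)
    case 0
    with inj2 that show ?thesis by (metis walk_from.simps(1) injD less_irrefl)
  next
    case (Suc a')
    with walk_from_rays_disjoint[OF assms] that show ?thesis by (metis Suc_pred)
  qed
  have "inj h"
  proof (rule injI)
    fix x y assume "h x = h y"
    then show "x = y"
      using inj1 inj2 disjoint[where a = "nat x" and b = "nat (- y)"] disjoint[where a = "nat y" and b = "nat (- x)"]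
      by (auto simp: h_def split: if_splits dest: injD)
  qed
  moreover have "E (h k) (h (k + 1))" for k
  proof -
    consider "0 \<le> k" | "k = -1" | "k + 1 < 0" by linarith
    then show ?thesis
    proof cases
      case 1
      then have "nat (k + 1) = Suc (nat k)" by simp
      with 1 show ?thesis using walk_from_edge[OF pq1, of "nat k"] by (simp add: h_def)
    next
      case 2
      then show ?thesis using walk_from_edge[OF pq2, of 0] sym by (simp add: h_def)
    next
      case 3
      then have "nat (- k) = Suc (nat (- (k + 1)))" by simp
      with 3 show ?thesis using walk_from_edge[OF pq2, of "nat (- (k + 1))"] sym by (simp add: h_def)
    qed
  qed
  moreover have "p = h 0" by (simp add: h_def)
  ultimately show ?thesis unfolding is_biinf_path_def by blast
qed

lemma vertex_on_circuit_or_biinf_path: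
  assumes "E p q"
  shows "(\<exists>n c. is_circuit E n c \<and> p \<in> c ` {..<n}) \<or> (\<exists>f. is_biinf_path E f \<and> p \<in> range f)"
proof -
  obtain q' where q': "E p q'" "q' \<noteq> q"
    using other_neighbour[OF assms] by blast
  show ?thesis
    using circuit_if_not_inj[OF assms] circuit_if_not_inj[OF q'(1)] biinf_path_if_inj[OF assms q'(1) q'(2)[symmetric]]
    by blast
qed

end

section \<open>Components of the dual edge boundary\<close>

lemma degree_two_graph_B_edge:
  assumes "site_connected V"
  shows "degree_two_graph (B_edge V)"
proof
  show "B_edge V b a" if "B_edge V a b" for a b using that by (rule B_edge_sym)
  show "\<not> B_edge V a a" for a by (rule B_edge_irrefl)
  show "card {c. B_edge V a c} = 2" if "B_edge V a b" for a b
  proof -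
    from that have "a \<in> B_verts V" unfolding B_verts_def by blast
    then show ?thesis using B_degree_eq_2[OF assms] by (simp add: B_degree_def)
  qed
qed

lemma B_vert_on_circuit_or_biinf_path:
  assumes "site_connected V" "p \<in> B_verts V"
  shows "(\<exists>n c. is_circuit (B_edge V) n c \<and> p \<in> c ` {..<n} \<and>
             (\<forall>u \<in> c ` {..<n}. \<forall>v. B_edge V u v \<longleftrightarrow>
                (\<exists>i<n. (u = c i \<and> v = c ((i + 1) mod n)) \<or> (v = c i \<and> u = c ((i + 1) mod n)))))
        \<or> (\<exists>f. is_biinf_path (B_edge V) f \<and> p \<in> range f \<and>
             (\<forall>u \<in> range f. \<forall>v. B_edge V u v \<longleftrightarrow>
                (\<exists>i. (u = f i \<and> v = f (i + 1)) \<or> (v = f i \<and> u = f (i + 1)))))"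
proof -
  interpret degree_two_graph "B_edge V" using degree_two_graph_B_edge[OF assms(1)] .
  obtain q where "B_edge V p q" using assms(2) by (auto simp: B_verts_def)
  from vertex_on_circuit_or_biinf_path[OF this] show ?thesis
  proof (elim disjE exE conjE)
    fix n c assume circ: "is_circuit (B_edge V) n c" and "p \<in> c ` {..<n}"
    moreover note circuit_neighbours[OF circ]
    ultimately show ?thesis by (intro disjI1 exI conjI ballI allI)
  next
    fix f assume path: "is_biinf_path (B_edge V) f" and "p \<in> range f"
    moreover note biinf_path_neighbours[OF path]
    ultimately show ?thesis by (intro disjI2 exI conjI ballI allI)
  qed
qed

theorem lemma3:
  fixes V :: "(int \<times> int) set"
  assumes "site_connected V"
  shows "(\<forall>p \<in> B_verts V. B_degree V p = 2)
    \<and> (\<forall>p \<in> B_verts V.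
          (\<exists>n c. is_circuit (B_edge V) n c \<and> p \<in> c ` {..<n} \<and>
             (\<forall>u \<in> c ` {..<n}. \<forall>v. B_edge V u v \<longleftrightarrow>
                (\<exists>i<n. (u = c i \<and> v = c ((i + 1) mod n)) \<or> (v = c i \<and> u = c ((i + 1) mod n)))))
        \<or> (\<exists>f. is_biinf_path (B_edge V) f \<and> p \<in> range f \<and>
             (\<forall>u \<in> range f. \<forall>v. B_edge V u v \<longleftrightarrow>
                (\<exists>i. (u = f i \<and> v = f (i + 1)) \<or> (v = f i \<and> u = f (i + 1))))))
    \<and> (infinite V \<longrightarrow> \<not> (\<exists>n c. is_circuit (B_edge V) n c))"
  using B_degree_eq_2[OF assms] B_vert_on_circuit_or_biinf_path[OF assms] no_circuit_if_infinite[OF assms]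
  by blast

end
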